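(* Let $M$ and $N$ be non-trivial $0$-left cancellative monoids with zero. If $M$ and $N$ both admit least common multiples (respectively, are both finitely aligned, respectively, are both strongly finitely aligned), then $M*_0N$ is a $0$-left cancellative monoid that admits least common multiples (respectively, is finitely aligned, respectively, is strongly finitely aligned).
   Context: A monoid with zero is non-trivial if $0\neq1$; $0$-left cancellative: $st=sr\neq0\Rightarrow t=r$. The $0$-free product $M*_0N$ is the coproduct in the category of monoids with zero (equivalently the Rees quotient of the free product $M*N$ by the ideal generated by the zeros of $M$ and $N$). A monoid $T$ with zero admits least common multiples if for all $s,t\in T$ there is $r\in T$ with $sT\cap tT=rT$. $T$ is finitely aligned if for all $s,t\in T$ there is a finite set $R\subseteq T$ with $sT\cap tT=\bigcup_{r\in R}rT$. $T$ is strongly finitely aligned if for all $s,t\in T$ there is a finite (possibly empty) $B\subseteq T\setminus\{0\}$ with $sT\cap tT=\bigcup_{b\in B}bT$ (interpreted as $\{0\}$ if $B=\emptyset$) and $bT\cap b'T=\{0\}$ for distinct $b,b'\in B$. *)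

theory Defs
  imports Main
begin

definition monoid0 :: "'m set \<Rightarrow> ('m \<Rightarrow> 'm \<Rightarrow> 'm) \<Rightarrow> 'm \<Rightarrow> 'm \<Rightarrow> bool" where
  "monoid0 S f e z \<longleftrightarrow>
     e \<in> S \<and> z \<in> S \<and> (\<forall>x\<in>S. \<forall>y\<in>S. f x y \<in> S) \<and>
     (\<forall>x\<in>S. \<forall>y\<in>S. \<forall>w\<in>S. f (f x y) w = f x (f y w)) \<and>
     (\<forall>x\<in>S. f e x = x \<and> f x e = x) \<and>
     (\<forall>x\<in>S. f z x = z \<and> f x z = z)"

definition rideal :: "'m set \<Rightarrow> ('m \<Rightarrow> 'm \<Rightarrow> 'm) \<Rightarrow> 'm \<Rightarrow> 'm set" where
  "rideal S f s = {f s t | t. t \<in> S}"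

definition zero_left_cancellative :: "'m set \<Rightarrow> ('m \<Rightarrow> 'm \<Rightarrow> 'm) \<Rightarrow> 'm \<Rightarrow> bool" where
  "zero_left_cancellative S f z \<longleftrightarrow>
     (\<forall>s\<in>S. \<forall>t\<in>S. \<forall>r\<in>S. f s t = f s r \<and> f s t \<noteq> z \<longrightarrow> t = r)"

definition admits_lcm :: "'m set \<Rightarrow> ('m \<Rightarrow> 'm \<Rightarrow> 'm) \<Rightarrow> bool" where
  "admits_lcm S f \<longleftrightarrow>
     (\<forall>s\<in>S. \<forall>t\<in>S. \<exists>r\<in>S. rideal S f s \<inter> rideal S f t = rideal S f r)"

definition finitely_aligned :: "'m set \<Rightarrow> ('m \<Rightarrow> 'm \<Rightarrow> 'm) \<Rightarrow> bool" where
  "finitely_aligned S f \<longleftrightarrow>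
     (\<forall>s\<in>S. \<forall>t\<in>S. \<exists>R. R \<subseteq> S \<and> finite R \<and>
        rideal S f s \<inter> rideal S f t = (\<Union>r\<in>R. rideal S f r))"

definition strongly_finitely_aligned :: "'m set \<Rightarrow> ('m \<Rightarrow> 'm \<Rightarrow> 'm) \<Rightarrow> 'm \<Rightarrow> bool" where
  "strongly_finitely_aligned S f z \<longleftrightarrow>
     (\<forall>s\<in>S. \<forall>t\<in>S. \<exists>B. B \<subseteq> S - {z} \<and> finite B \<and>
        rideal S f s \<inter> rideal S f t = (if B = {} then {z} else (\<Union>b\<in>B. rideal S f b)) \<and>
        (\<forall>b\<in>B. \<forall>b'\<in>B. b \<noteq> b' \<longrightarrow> rideal S f b \<inter> rideal S f b' = {z}))"

text \<open>Elements: the zero, or a reduced word: an alternating word of letters from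
  M - {0,1} and N - {0,1} (the empty word is the identity).\<close>
datatype ('a, 'b) zfp = Zero | Word "('a + 'b) list"

fun letter_ok :: "('a::{monoid_mult,mult_zero} + 'b::{monoid_mult,mult_zero}) \<Rightarrow> bool" where
  "letter_ok (Inl a) = (a \<noteq> 0 \<and> a \<noteq> 1)"
| "letter_ok (Inr b) = (b \<noteq> 0 \<and> b \<noteq> 1)"

fun same_side :: "('a + 'b) \<Rightarrow> ('a + 'b) \<Rightarrow> bool" where
  "same_side (Inl _) (Inl _) = True"
| "same_side (Inr _) (Inr _) = True"
| "same_side _ _ = False"

definition reduced :: "('a::{monoid_mult,mult_zero} + 'b::{monoid_mult,mult_zero}) list \<Rightarrow> bool" where
  "reduced w \<longleftrightarrow> (\<forall>x\<in>set w. letter_ok x) \<and>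
     (\<forall>i. Suc i < length w \<longrightarrow> \<not> same_side (w ! i) (w ! Suc i))"

definition zfp_carrier :: "('a::{monoid_mult,mult_zero}, 'b::{monoid_mult,mult_zero}) zfp set" where
  "zfp_carrier = insert Zero {Word w | w. reduced w}"

fun zpush :: "('a::{monoid_mult,mult_zero} + 'b::{monoid_mult,mult_zero}) \<Rightarrow> ('a, 'b) zfp \<Rightarrow> ('a, 'b) zfp" where
  "zpush x Zero = Zero"
| "zpush (Inl a) (Word w) =
     (if a = 0 then Zero else if a = 1 then Word w else
      (case w of
         Inl b # w' \<Rightarrow> (if a * b = 0 then Zero else if a * b = 1 then Word w' else Word (Inl (a * b) # w'))
       | _ \<Rightarrow> Word (Inl a # w)))"
| "zpush (Inr a) (Word w) =
     (if a = 0 then Zero else if a = 1 then Word w else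
      (case w of
         Inr b # w' \<Rightarrow> (if a * b = 0 then Zero else if a * b = 1 then Word w' else Word (Inr (a * b) # w'))
       | _ \<Rightarrow> Word (Inr a # w)))"

fun zfp_mult :: "('a::{monoid_mult,mult_zero}, 'b::{monoid_mult,mult_zero}) zfp \<Rightarrow> ('a, 'b) zfp \<Rightarrow> ('a, 'b) zfp" where
  "zfp_mult Zero v = Zero"
| "zfp_mult (Word u) v = foldr zpush u v"

definition zfp_one :: "('a, 'b) zfp" where "zfp_one = Word []"

end

theory Submission
  imports Defs
begin

text \<open>
  Deleting a final letter that is right
  invertible in its factor does not change the principal right ideal of a word. If the final
  letter \<open>x\<close> of \<open>p x\<close> is not right invertible, \<open>p x\<close> generates the cylinder of \<open>0\<close>
  and all reduced words \<open>p c r\<close> with \<open>c \<in> x M\<close> (resp. \<open>x N\<close>). Two such cylinders over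
  prefixes \<open>p\<close> and \<open>q\<close> meet only in \<open>0\<close> unless one contains the other, or \<open>p = q\<close> and
  their intersection is the cylinder over \<open>p\<close> of \<open>x M \<inter> y M\<close>. So every intersection of
  two principal right ideals is \<open>{0}\<close>, principal, or the image of an intersection of two
  principal right ideals of a factor under \<open>c \<mapsto> p c\<close>, which maps principal right ideals to
  principal right ideals and respects finiteness and disjointness. Zero-left cancellativity
  reduces to cancelling a single letter against a reduced word.
\<close>

section \<open>Principal right ideals and injective homomorphisms\<close>

lemma rideal_mult_subset:
  assumes "monoid0 S f e z" "a \<in> S" "b \<in> S"
  shows "rideal S f (f a b) \<subseteq> rideal S f a"
proof
  fix x assume "x \<in> rideal S f (f a b)"
  then obtain t where "t \<in> S" "x = f (f a b) t" by (auto simp: rideal_def)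
  with assms have "f b t \<in> S" "x = f a (f b t)" by (simp_all add: monoid0_def)
  then show "x \<in> rideal S f a" by (auto simp: rideal_def)
qed

lemma rideal_zero:
  assumes "monoid0 S f e z"
  shows "rideal S f z = {z}"
proof -
  have "z \<in> S" "\<forall>t\<in>S. f z t = z" using assms by (simp_all add: monoid0_def)
  then show ?thesis unfolding rideal_def by force
qed

lemma rideal_one:
  assumes "monoid0 S f e z"
  shows "rideal S f e = S"
proof -
  have "\<forall>t\<in>S. f e t = t" using assms by (simp add: monoid0_def)
  then show ?thesis unfolding rideal_def by force
qed

lemma rideal_image:
  assumes hom: "\<And>a b. g (h a) (h b) = h (f a b)"
  shows "rideal (range h) g (h s) = h ` rideal UNIV f s"
  unfolding rideal_def by (auto simp: hom) (metis hom rangeI)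

lemma zero_left_cancellative_image:
  assumes "inj h" and hom: "\<And>a b. g (h a) (h b) = h (f a b)"
    and zlc: "zero_left_cancellative UNIV f z"
  shows "zero_left_cancellative (range h) g (h z)"
  unfolding zero_left_cancellative_def
proof (intro ballI impI)
  fix s t r assume "s \<in> range h" "t \<in> range h" "r \<in> range h"
    and st: "g s t = g s r \<and> g s t \<noteq> h z"
  then obtain a b c where "s = h a" "t = h b" "r = h c" by blast
  with st have "f a b = f a c" "f a b \<noteq> z" by (auto simp: hom inj_eq[OF \<open>inj h\<close>])
  then show "t = r" using zlc \<open>t = h b\<close> \<open>r = h c\<close> unfolding zero_left_cancellative_def by blast
qed

lemma rideal_Int_image:
  assumes "inj h" and hom: "\<And>a b. g (h a) (h b) = h (f a b)"
  shows "rideal (range h) g (h a) \<inter> rideal (range h) g (h b) = h ` (rideal UNIV f a \<inter> rideal UNIV f b)"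
  by (simp add: rideal_image[of g h f, OF hom] image_Int[OF \<open>inj h\<close>])

lemma admits_lcm_image:
  assumes "inj h" and hom: "\<And>a b. g (h a) (h b) = h (f a b)" and lcm: "admits_lcm UNIV f"
  shows "admits_lcm (range h) g"
  unfolding admits_lcm_def
proof (intro ballI)
  fix s t assume "s \<in> range h" "t \<in> range h"
  then obtain a b where ab: "s = h a" "t = h b" by blast
  obtain c where "rideal UNIV f a \<inter> rideal UNIV f b = rideal UNIV f c"
    using lcm unfolding admits_lcm_def by blast
  then have "rideal (range h) g s \<inter> rideal (range h) g t = rideal (range h) g (h c)"
    unfolding ab rideal_Int_image[of h g f, OF \<open>inj h\<close> hom] by (simp add: rideal_image[of g h f, OF hom])
  then show "\<exists>r\<in>range h. rideal (range h) g s \<inter> rideal (range h) g t = rideal (range h) g r"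
    by blast
qed

lemma finitely_aligned_image:
  assumes "inj h" and hom: "\<And>a b. g (h a) (h b) = h (f a b)" and fa: "finitely_aligned UNIV f"
  shows "finitely_aligned (range h) g"
  unfolding finitely_aligned_def
proof (intro ballI)
  fix s t assume "s \<in> range h" "t \<in> range h"
  then obtain a b where ab: "s = h a" "t = h b" by blast
  obtain R where R: "finite R" "rideal UNIV f a \<inter> rideal UNIV f b = (\<Union>r\<in>R. rideal UNIV f r)"
    using fa unfolding finitely_aligned_def by (meson UNIV_I)
  have "rideal (range h) g s \<inter> rideal (range h) g t = h ` (rideal UNIV f a \<inter> rideal UNIV f b)"
    unfolding ab by (rule rideal_Int_image[of h g f, OF \<open>inj h\<close> hom])
  also have "\<dots> = (\<Union>r\<in>R. h ` rideal UNIV f r)"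
    unfolding R(2) by (rule image_UN)
  also have "\<dots> = (\<Union>r\<in>h ` R. rideal (range h) g r)"
    by (simp add: rideal_image[of g h f, OF hom])
  finally show "\<exists>R'. R' \<subseteq> range h \<and> finite R' \<and>
      rideal (range h) g s \<inter> rideal (range h) g t = (\<Union>r\<in>R'. rideal (range h) g r)"
    using R(1) by (intro exI[of _ "h ` R"]) auto
qed

lemma strongly_finitely_aligned_image:
  assumes "inj h" and hom: "\<And>a b. g (h a) (h b) = h (f a b)"
    and sfa: "strongly_finitely_aligned UNIV f z"
  shows "strongly_finitely_aligned (range h) g (h z)"
  unfolding strongly_finitely_aligned_def
proof (intro ballI)
  fix s t assume "s \<in> range h" "t \<in> range h"
  then obtain a b where ab: "s = h a" "t = h b" by blast
  obtain B where B: "B \<subseteq> UNIV - {z}" "finite B"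
    "rideal UNIV f a \<inter> rideal UNIV f b = (if B = {} then {z} else (\<Union>r\<in>B. rideal UNIV f r))"
    "\<forall>b\<in>B. \<forall>b'\<in>B. b \<noteq> b' \<longrightarrow> rideal UNIV f b \<inter> rideal UNIV f b' = {z}"
    using sfa unfolding strongly_finitely_aligned_def by (meson UNIV_I)
  note Int_image = rideal_Int_image[of h g f, OF \<open>inj h\<close> hom]
  have "h ` B \<subseteq> range h - {h z}" using B(1) inj_eq[OF \<open>inj h\<close>] by auto
  moreover have "rideal (range h) g s \<inter> rideal (range h) g t =
      (if h ` B = {} then {h z} else (\<Union>r\<in>h ` B. rideal (range h) g r))"
  proof -
    have "rideal (range h) g s \<inter> rideal (range h) g t = h ` (rideal UNIV f a \<inter> rideal UNIV f b)"
      unfolding ab by (rule Int_image)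
    also have "\<dots> = (if B = {} then {h z} else (\<Union>r\<in>B. h ` rideal UNIV f r))"
      unfolding B(3) by (simp add: image_UN)
    finally show ?thesis by (simp add: rideal_image[of g h f, OF hom])
  qed
  moreover have "\<forall>r\<in>h ` B. \<forall>r'\<in>h ` B. r \<noteq> r' \<longrightarrow> rideal (range h) g r \<inter> rideal (range h) g r' = {h z}"
  proof (intro ballI impI)
    fix r r' assume "r \<in> h ` B" "r' \<in> h ` B" "r \<noteq> r'"
    then obtain c d where "c \<in> B" "d \<in> B" "c \<noteq> d" "r = h c" "r' = h d" by blast
    then show "rideal (range h) g r \<inter> rideal (range h) g r' = {h z}"
      using B(4) Int_image[of c d] by simp
  qed
  ultimately show "\<exists>B'. B' \<subseteq> range h - {h z} \<and> finite B' \<and>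
      rideal (range h) g s \<inter> rideal (range h) g t =
        (if B' = {} then {h z} else (\<Union>r\<in>B'. rideal (range h) g r)) \<and>
      (\<forall>r\<in>B'. \<forall>r'\<in>B'. r \<noteq> r' \<longrightarrow> rideal (range h) g r \<inter> rideal (range h) g r' = {h z})"
    using B(2) by blast
qed

lemma same_side_iff [simp]: "same_side x y \<longleftrightarrow> isl x = isl y"
  by (cases x; cases y) auto

lemma reduced_Nil [simp]: "reduced []"
  by (simp add: reduced_def)

lemma reduced_Cons:
  "reduced (x # w) \<longleftrightarrow> letter_ok x \<and> reduced w \<and> (w \<noteq> [] \<longrightarrow> isl x \<noteq> isl (hd w))"
  by (cases w) (auto simp: reduced_def nth_Cons less_Suc_eq_0_disj split: nat.splits)

lemma reduced_single [simp]: "reduced [x] \<longleftrightarrow> letter_ok x"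
  by (simp add: reduced_Cons)

lemma reduced_append:
  "reduced (u @ v) \<longleftrightarrow>
     reduced u \<and> reduced v \<and> (u \<noteq> [] \<longrightarrow> v \<noteq> [] \<longrightarrow> isl (last u) \<noteq> isl (hd v))"
  by (induction u) (auto simp: reduced_Cons)

section \<open>Letters\<close>

(* Letters of different factors are never multiplied; the last clause is a junk value. *)
fun letter_mult :: "('a::{monoid_mult,mult_zero} + 'b::{monoid_mult,mult_zero}) \<Rightarrow> ('a + 'b) \<Rightarrow> ('a + 'b)" where
  "letter_mult (Inl a) (Inl b) = Inl (a * b)"
| "letter_mult (Inr a) (Inr b) = Inr (a * b)"
| "letter_mult x _ = x"

fun factor_zero :: "('a::{monoid_mult,mult_zero} + 'b::{monoid_mult,mult_zero}) \<Rightarrow> ('a + 'b)" where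
  "factor_zero (Inl _) = Inl 0"
| "factor_zero (Inr _) = Inr 0"

fun factor_one :: "('a::{monoid_mult,mult_zero} + 'b::{monoid_mult,mult_zero}) \<Rightarrow> ('a + 'b)" where
  "factor_one (Inl _) = Inl 1"
| "factor_one (Inr _) = Inr 1"

definition factor :: "('a + 'b) \<Rightarrow> ('a + 'b) set" where
  "factor x = {y. isl y = isl x}"

lemma isl_letter_mult [simp]: "isl (letter_mult x y) = isl x"
  by (cases x; cases y) auto

lemma isl_factor_zero [simp]: "isl (factor_zero x) = isl x"
  and isl_factor_one [simp]: "isl (factor_one x) = isl x"
  by (cases x; simp)+

lemma factor_zero_cong: "isl y = isl x \<Longrightarrow> factor_zero y = factor_zero x"
  and factor_one_cong: "isl y = isl x \<Longrightarrow> factor_one y = factor_one x"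
  by (cases x; cases y; simp)+

lemma factor_cong: "isl y = isl x \<Longrightarrow> factor y = factor x"
  by (simp add: factor_def)

lemma factor_zero_letter_mult [simp]: "factor_zero (letter_mult x y) = factor_zero x"
  and factor_one_letter_mult [simp]: "factor_one (letter_mult x y) = factor_one x"
  and factor_zero_idem [simp]: "factor_zero (factor_zero x) = factor_zero x"
  and factor_one_idem [simp]: "factor_one (factor_one x) = factor_one x"
  and factor_zero_factor_one [simp]: "factor_zero (factor_one x) = factor_zero x"
  and factor_one_factor_zero [simp]: "factor_one (factor_zero x) = factor_one x"
  by (cases x; cases y; simp)+

lemma letter_mult_assoc:
  "isl y = isl x \<Longrightarrow> isl z = isl x \<Longrightarrow> letter_mult (letter_mult x y) z = letter_mult x (letter_mult y z)"
  by (cases x; cases y; cases z) (auto simp: mult.assoc)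

lemma letter_mult_factor_one [simp]:
  "isl y = isl x \<Longrightarrow> letter_mult (factor_one x) y = y"
  "letter_mult x (factor_one x) = x"
  by (cases x; cases y; simp)+

lemma letter_mult_factor_zero [simp]:
  "letter_mult (factor_zero x) y = factor_zero x"
  "letter_mult x (factor_zero x) = factor_zero x"
  by (cases x; cases y; simp)+

lemma letter_ok_iff: "letter_ok x \<longleftrightarrow> x \<noteq> factor_zero x \<and> x \<noteq> factor_one x"
  by (cases x) auto

lemma factor_one_neq_factor_zero: "letter_ok x \<Longrightarrow> factor_one x \<noteq> factor_zero x"
  by (metis letter_ok_iff letter_mult_factor_one(2) letter_mult_factor_zero(2))

lemma factor_Inl: "factor (Inl a) = range Inl"
  by (auto simp: factor_def) (metis sum.collapse(1) rangeI)

lemma factor_Inr: "factor (Inr b) = range Inr"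
  by (auto simp: factor_def) (metis sum.collapse(2) rangeI)

lemma factor_property:
  assumes "P (range (Inl :: 'a \<Rightarrow> 'a + 'b)) letter_mult (Inl 0)" "P (range (Inr :: 'b \<Rightarrow> 'a + 'b)) letter_mult (Inr 0)"
  shows "P (factor x) letter_mult (factor_zero (x :: 'a::{monoid_mult,mult_zero} + 'b::{monoid_mult,mult_zero}))"
  using assms by (cases x) (simp_all add: factor_Inl factor_Inr)

lemma factor_zero_left_cancellative:
  assumes "zero_left_cancellative (UNIV::'a::{monoid_mult,mult_zero} set) (*) 0"
    and "zero_left_cancellative (UNIV::'b::{monoid_mult,mult_zero} set) (*) 0"
  shows "zero_left_cancellative (factor (x::'a + 'b)) letter_mult (factor_zero x)"
  using factor_property[where P = zero_left_cancellative and x = x]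
    zero_left_cancellative_image[OF inj_Inl _ assms(1), of letter_mult]
    zero_left_cancellative_image[OF inj_Inr _ assms(2), of letter_mult]
  by simp

lemma factor_admits_lcm:
  assumes "admits_lcm (UNIV::'a::{monoid_mult,mult_zero} set) (*)"
    and "admits_lcm (UNIV::'b::{monoid_mult,mult_zero} set) (*)"
  shows "admits_lcm (factor (x::'a + 'b)) letter_mult"
  using factor_property[where P = "\<lambda>S f z. admits_lcm S f" and x = x]
    admits_lcm_image[OF inj_Inl _ assms(1), of letter_mult] admits_lcm_image[OF inj_Inr _ assms(2), of letter_mult]
  by simp

lemma factor_finitely_aligned:
  assumes "finitely_aligned (UNIV::'a::{monoid_mult,mult_zero} set) (*)"
    and "finitely_aligned (UNIV::'b::{monoid_mult,mult_zero} set) (*)"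
  shows "finitely_aligned (factor (x::'a + 'b)) letter_mult"
  using factor_property[where P = "\<lambda>S f z. finitely_aligned S f" and x = x]
    finitely_aligned_image[OF inj_Inl _ assms(1), of letter_mult]
    finitely_aligned_image[OF inj_Inr _ assms(2), of letter_mult]
  by simp

lemma factor_strongly_finitely_aligned:
  assumes "strongly_finitely_aligned (UNIV::'a::{monoid_mult,mult_zero} set) (*) 0"
    and "strongly_finitely_aligned (UNIV::'b::{monoid_mult,mult_zero} set) (*) 0"
  shows "strongly_finitely_aligned (factor (x::'a + 'b)) letter_mult (factor_zero x)"
  using factor_property[where P = strongly_finitely_aligned and x = x]
    strongly_finitely_aligned_image[OF inj_Inl _ assms(1), of letter_mult]
    strongly_finitely_aligned_image[OF inj_Inr _ assms(2), of letter_mult]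
  by simp

lemma letter_mult_left_cancel:
  assumes "zero_left_cancellative (factor x) letter_mult (factor_zero x)"
    and "isl y = isl x" "isl z = isl x" "letter_mult x y = letter_mult x z" "letter_mult x y \<noteq> factor_zero x"
  shows "y = z"
  using assms unfolding zero_left_cancellative_def factor_def by blast

lemma letter_mult_neq_self:
  assumes zlc: "zero_left_cancellative (factor x) letter_mult (factor_zero x)" and x: "letter_ok x"
    and y: "isl y = isl x" "letter_ok y"
  shows "letter_mult x y \<noteq> x"
proof
  assume "letter_mult x y = x"
  then have "y = factor_one x"
    using x letter_mult_left_cancel[OF zlc y(1), of "factor_one x"] by (simp add: letter_ok_iff)
  then show False using y factor_one_cong[OF y(1)] by (simp add: letter_ok_iff)
qed

definition letter_rideal :: "('a::{monoid_mult,mult_zero} + 'b::{monoid_mult,mult_zero}) \<Rightarrow> ('a + 'b) set" where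
  "letter_rideal x = rideal (factor x) letter_mult x"

lemma letter_rideal_iff: "c \<in> letter_rideal x \<longleftrightarrow> (\<exists>m. isl m = isl x \<and> c = letter_mult x m)"
  by (auto simp: letter_rideal_def rideal_def factor_def)

lemma letter_rideal_in_factor: "c \<in> factor x \<Longrightarrow> letter_rideal c = rideal (factor x) letter_mult c"
  by (simp add: letter_rideal_def factor_def)

lemma isl_letter_rideal: "c \<in> letter_rideal x \<Longrightarrow> isl c = isl x"
  by (auto simp: letter_rideal_iff)

lemma self_in_letter_rideal: "x \<in> letter_rideal x"
  unfolding letter_rideal_iff by (metis isl_factor_one letter_mult_factor_one(2))

lemma factor_zero_in_letter_rideal: "factor_zero x \<in> letter_rideal x"
  unfolding letter_rideal_iff by (metis isl_factor_zero letter_mult_factor_zero(2))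

lemma letter_rideal_factor_zero: "letter_rideal (factor_zero x) = {factor_zero x}"
  by (auto simp: letter_rideal_iff)

lemma letter_rideal_Int_other_factor: "isl y \<noteq> isl x \<Longrightarrow> letter_rideal x \<inter> letter_rideal y = {}"
  using isl_letter_rideal by blast

definition letter_unit :: "('a::{monoid_mult,mult_zero} + 'b::{monoid_mult,mult_zero}) \<Rightarrow> bool" where
  "letter_unit x \<longleftrightarrow> (\<exists>y. isl y = isl x \<and> letter_mult x y = factor_one x)"

lemma letter_unit_rideal:
  assumes "c \<in> letter_rideal x" "letter_unit c"
  shows "letter_unit x"
proof -
  obtain m n where "isl m = isl x" "c = letter_mult x m" "isl n = isl x" "letter_mult c n = factor_one c"
    using assms by (auto simp: letter_rideal_iff letter_unit_def)
  then have "isl (letter_mult m n) = isl x" "letter_mult x (letter_mult m n) = factor_one x"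
    by (simp_all add: letter_mult_assoc)
  then show ?thesis unfolding letter_unit_def by blast
qed

section \<open>The monoid structure\<close>

(* The normal form of x w, for w reduced and not starting in the factor of x. *)
definition zfp_cons :: "('a::{monoid_mult,mult_zero} + 'b::{monoid_mult,mult_zero}) \<Rightarrow> ('a + 'b) list \<Rightarrow> ('a, 'b) zfp" where
  "zfp_cons x w = (if x = factor_zero x then Zero else if x = factor_one x then Word w else Word (x # w))"

lemma zfp_cons_letter: "letter_ok c \<Longrightarrow> zfp_cons c w = Word (c # w)"
  by (simp add: zfp_cons_def letter_ok_iff)

lemma zfp_cons_eq_Zero_iff: "zfp_cons c u = Zero \<longleftrightarrow> c = factor_zero c"
  by (simp add: zfp_cons_def)

lemma zpush_Word:
  assumes "reduced w"
  shows "zpush x (Word w) =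
     (case w of y # w' \<Rightarrow> if isl y = isl x then zfp_cons (letter_mult x y) w' else zfp_cons x w
              | [] \<Rightarrow> zfp_cons x [])"
proof (cases w)
  case (Cons y w')
  then show ?thesis using assms by (cases x; cases y) (auto simp: zfp_cons_def reduced_Cons)
qed (cases x; auto simp: zfp_cons_def)

declare zpush.simps(2,3) [simp del]

lemma zpush_Word_cases:
  assumes "reduced w"
  obtains (merge) y w' where "w = y # w'" "isl y = isl x" "letter_ok y"
      "w' = [] \<or> isl (hd w') \<noteq> isl x" "zpush x (Word w) = zfp_cons (letter_mult x y) w'"
    | (prepend) "w = [] \<or> isl (hd w) \<noteq> isl x" "zpush x (Word w) = zfp_cons x w"
proof (cases w)
  case Nil
  then show ?thesis using prepend by (simp add: zpush_Word)
next
  case (Cons y w')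
  show ?thesis
  proof (cases "isl y = isl x")
    case True
    then show ?thesis using merge[of y w'] Cons assms by (auto simp: zpush_Word reduced_Cons)
  next
    case False
    then show ?thesis using prepend Cons assms by (simp add: zpush_Word)
  qed
qed


lemma Word_in_carrier [simp]: "Word w \<in> zfp_carrier \<longleftrightarrow> reduced w"
  and Zero_in_carrier [simp]: "Zero \<in> zfp_carrier"
  by (auto simp: zfp_carrier_def)

lemma zfp_carrier_cases:
  assumes "t \<in> zfp_carrier"
  obtains "t = Zero" | w where "t = Word w" "reduced w"
  using assms by (auto simp: zfp_carrier_def)

lemma zfp_cons_in_carrier:
  "reduced w \<Longrightarrow> (w \<noteq> [] \<Longrightarrow> isl (hd w) \<noteq> isl x) \<Longrightarrow> zfp_cons x w \<in> zfp_carrier"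
  by (auto simp: zfp_cons_def reduced_Cons letter_ok_iff)

lemma zpush_in_carrier:
  assumes "t \<in> zfp_carrier"
  shows "zpush x t \<in> zfp_carrier"
  using assms
proof (cases rule: zfp_carrier_cases)
  case (2 w)
  then show ?thesis
    by (cases w) (auto simp: zpush_Word reduced_Cons intro!: zfp_cons_in_carrier)
qed simp

lemma foldr_zpush_in_carrier: "t \<in> zfp_carrier \<Longrightarrow> foldr zpush u t \<in> zfp_carrier"
  by (induction u) (auto intro: zpush_in_carrier)

lemma zfp_mult_in_carrier: "s \<in> zfp_carrier \<Longrightarrow> t \<in> zfp_carrier \<Longrightarrow> zfp_mult s t \<in> zfp_carrier"
  by (cases s) (auto intro: foldr_zpush_in_carrier)

lemma foldr_zpush_Zero [simp]: "foldr zpush u Zero = Zero"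
  by (induction u) simp_all

lemma zpush_zfp_cons:
  assumes w: "reduced w" "w \<noteq> [] \<Longrightarrow> isl (hd w) \<noteq> isl y" and xy: "isl y = isl x"
  shows "zpush x (zfp_cons y w) = zfp_cons (letter_mult x y) w"
proof -
  have sz: "factor_zero y = factor_zero x" and so: "factor_one y = factor_one x"
    using xy by (rule factor_zero_cong, rule factor_one_cong)
  show ?thesis
  proof (cases "y = factor_zero y")
    case True
    then have "letter_mult x y = factor_zero x" using sz by (metis letter_mult_factor_zero(2))
    then show ?thesis using True by (simp add: zfp_cons_def)
  next
    case False
    show ?thesis
    proof (cases "y = factor_one y")
      case True
      then have "letter_mult x y = x" using so by (metis letter_mult_factor_one(2))
      then show ?thesis using True False w xy
        by (cases w) (auto simp: zfp_cons_def zpush_Word)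
    next
      case False
      with \<open>y \<noteq> factor_zero y\<close> w xy have "reduced (y # w)"
        by (auto simp: reduced_Cons letter_ok_iff)
      then show ?thesis using \<open>y \<noteq> factor_zero y\<close> False xy
        by (simp add: zfp_cons_def zpush_Word)
    qed
  qed
qed

lemma zpush_zpush:
  assumes t: "t \<in> zfp_carrier" and xy: "isl y = isl x"
  shows "zpush x (zpush y t) = zpush (letter_mult x y) t"
  using t
proof (cases rule: zfp_carrier_cases)
  case (2 w)
  show ?thesis
  proof (cases w)
    case Nil
    then show ?thesis using xy zpush_zfp_cons[of "[]"] by (simp add: 2 zpush_Word)
  next
    case (Cons z w')
    have w': "reduced w'" "w' \<noteq> [] \<Longrightarrow> isl (hd w') \<noteq> isl z"
      using 2 Cons by (auto simp: reduced_Cons)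
    show ?thesis
    proof (cases "isl z = isl y")
      case True
      then show ?thesis using 2 Cons w' xy
        by (simp add: zpush_Word zpush_zfp_cons letter_mult_assoc)
    next
      case False
      then show ?thesis using 2 Cons xy
        by (simp add: zpush_Word zpush_zfp_cons reduced_Cons)
    qed
  qed
qed simp

lemma zpush_factor_zero [simp]: "zpush (factor_zero x) t = Zero"
  by (cases x; cases t) (simp_all add: zpush.simps(2,3))

lemma zpush_factor_one: "factor_one x \<noteq> factor_zero x \<Longrightarrow> zpush (factor_one x) t = t"
  by (cases x; cases t) (simp_all add: zpush.simps(2,3))

lemma zfp_mult_zfp_cons: "zfp_mult (zfp_cons x w) t = zpush x (zfp_mult (Word w) t)"
proof (cases "x = factor_zero x")
  case True
  then have "zpush x s = Zero" for s by (metis zpush_factor_zero)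
  then show ?thesis using True by (simp add: zfp_cons_def)
next
  case False
  show ?thesis
  proof (cases "x = factor_one x")
    case True
    with False have "zpush x s = s" for s by (metis zpush_factor_one)
    then show ?thesis using True False by (simp add: zfp_cons_def)
  qed (use False in \<open>simp add: zfp_cons_def\<close>)
qed

lemma zpush_reduced_Cons: "reduced (x # w) \<Longrightarrow> zpush x (Word w) = Word (x # w)"
  by (cases w) (auto simp: zpush_Word zfp_cons_def reduced_Cons letter_ok_iff)

lemma zfp_mult_Word_Word: "reduced (u @ v) \<Longrightarrow> zfp_mult (Word u) (Word v) = Word (u @ v)"
  by (induction u) (auto simp: reduced_Cons zpush_reduced_Cons)

lemma zfp_mult_zpush:
  assumes y: "y \<in> zfp_carrier" and z: "z \<in> zfp_carrier"
  shows "zfp_mult (zpush x y) z = zpush x (zfp_mult y z)"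
  using y
proof (cases rule: zfp_carrier_cases)
  case (2 w)
  show ?thesis
  proof (cases w)
    case (Cons v w')
    have "zfp_mult (Word w') z \<in> zfp_carrier" using z by (simp add: foldr_zpush_in_carrier)
    then show ?thesis using 2 Cons
      by (auto simp: zpush_Word zfp_mult_zfp_cons zpush_zpush)
  qed (simp add: 2 zpush_Word zfp_mult_zfp_cons)
qed simp

lemma zfp_mult_assoc:
  assumes "s \<in> zfp_carrier" "t \<in> zfp_carrier" "u \<in> zfp_carrier"
  shows "zfp_mult (zfp_mult s t) u = zfp_mult s (zfp_mult t u)"
proof (cases s)
  case (Word w)
  have "zfp_mult (foldr zpush w t) u = foldr zpush w (zfp_mult t u)"
    using assms(2) by (induction w) (auto simp: zfp_mult_zpush[OF _ assms(3)] foldr_zpush_in_carrier)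
  then show ?thesis using Word by simp
qed simp

lemma zfp_monoid0: "monoid0 zfp_carrier zfp_mult zfp_one Zero"
  unfolding monoid0_def
proof (intro conjI ballI)
  fix x :: "('a, 'b) zfp" assume "x \<in> zfp_carrier"
  then show "zfp_mult x zfp_one = x"
  proof (cases rule: zfp_carrier_cases)
    case (2 w)
    then show ?thesis using zfp_mult_Word_Word[of w "[]"] by (simp add: zfp_one_def)
  qed (simp add: zfp_one_def)
  show "zfp_mult x Zero = Zero"
    by (cases x) simp_all
qed (auto simp: zfp_one_def zfp_mult_in_carrier zfp_mult_assoc)

section \<open>Zero-left cancellativity\<close>

lemma zfp_cons_inj:
  assumes eq: "zfp_cons c u = zfp_cons c' u'" and nz: "zfp_cons c u \<noteq> Zero" and cc': "isl c' = isl c"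
    and u: "u = [] \<or> isl (hd u) \<noteq> isl c" and u': "u' = [] \<or> isl (hd u') \<noteq> isl c"
  shows "c = c' \<and> u = u'"
proof -
  have z: "factor_zero c' = factor_zero c" and o: "factor_one c' = factor_one c"
    using cc' by (rule factor_zero_cong, rule factor_one_cong)
  have c: "c \<noteq> factor_zero c" and c': "c' \<noteq> factor_zero c"
    using nz eq z unfolding zfp_cons_def by metis+
  \<comment> \<open>abbreviating \<open>factor_one c\<close> stops the simplifier looping on \<open>c = factor_one c\<close>\<close>
  define e where "e = factor_one c"
  have "zfp_cons c u = Word (if c = e then u else c # u)"
    unfolding zfp_cons_def e_def if_not_P[OF c] by (rule if_distrib[symmetric])
  moreover have "zfp_cons c' u' = Word (if c' = e then u' else c' # u')"
    unfolding zfp_cons_def e_def z o if_not_P[OF c'] by (rule if_distrib[symmetric])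
  ultimately have ifs: "(if c = e then u else c # u) = (if c' = e then u' else c' # u')"
    using eq by simp
  show ?thesis
  proof (cases "c = e"; cases "c' = e")
    assume "c = e" "c' \<noteq> e"
    then have "u = c' # u'" using ifs by simp
    then show ?thesis using u cc' by simp
  next
    assume "c \<noteq> e" "c' = e"
    then have "u' = c # u" using ifs by simp
    then show ?thesis using u' by simp
  qed (use ifs in simp_all)
qed

lemma zpush_left_cancel:
  assumes zlc: "zero_left_cancellative (factor x) letter_mult (factor_zero x)" and x: "letter_ok x"
    and t: "t \<in> zfp_carrier" and r: "r \<in> zfp_carrier"
    and eq: "zpush x t = zpush x r" and nz: "zpush x t \<noteq> Zero"
  shows "t = r"
proof -
  \<comment> \<open>both sides are \<open>zfp_cons c u\<close> with \<open>c\<close> in the factor of \<open>x\<close>; compare \<open>c\<close> and \<open>u\<close>\<close>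
  obtain w v where tw: "t = Word w" "reduced w" and rv: "r = Word v" "reduced v"
    using t r eq nz by (auto elim!: zfp_carrier_cases)
  from tw(2) show ?thesis
  proof (cases rule: zpush_Word_cases[where x = x])
    case (merge y w')
    from rv(2) show ?thesis
    proof (cases rule: zpush_Word_cases[where x = x])
      case merge': (merge y' v')
      with merge have "letter_mult x y = letter_mult x y' \<and> w' = v'"
        using eq nz tw rv by (intro zfp_cons_inj) auto
      then show ?thesis using merge merge' letter_mult_left_cancel[OF zlc, of y y'] nz tw rv
        by (auto simp: zfp_cons_eq_Zero_iff)
    next
      case prepend
      with merge have "letter_mult x y = x \<and> w' = v"
        using eq nz tw rv by (intro zfp_cons_inj) auto
      then show ?thesis using letter_mult_neq_self[OF zlc x] merge by blast
    qed
  next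
    case prepend
    from rv(2) show ?thesis
    proof (cases rule: zpush_Word_cases[where x = x])
      case (merge y' v')
      with prepend have "x = letter_mult x y' \<and> w = v'"
        using eq nz tw rv by (intro zfp_cons_inj) auto
      then show ?thesis using letter_mult_neq_self[OF zlc x] merge by metis
    next
      case prepend': prepend
      with prepend have "x = x \<and> w = v"
        using eq nz tw rv by (intro zfp_cons_inj) auto
      then show ?thesis using tw rv by simp
    qed
  qed
qed

lemma foldr_zpush_left_cancel:
  fixes u :: "('a::{monoid_mult,mult_zero} + 'b::{monoid_mult,mult_zero}) list"
  assumes zlc: "\<And>x::'a + 'b. zero_left_cancellative (factor x) letter_mult (factor_zero x)"
    and "reduced u" "t \<in> zfp_carrier" "r \<in> zfp_carrier"
    and "foldr zpush u t = foldr zpush u r" "foldr zpush u t \<noteq> Zero"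
  shows "t = r"
  using assms(2-)
proof (induction u)
  case (Cons x u)
  have x: "letter_ok x" and u: "reduced u" using Cons.prems(1) by (simp_all add: reduced_Cons)
  have "foldr zpush u t = foldr zpush u r"
  proof (rule zpush_left_cancel[OF zlc x])
    show "foldr zpush u t \<in> zfp_carrier" "foldr zpush u r \<in> zfp_carrier"
      using Cons.prems(2,3) by (simp_all add: foldr_zpush_in_carrier)
    show "zpush x (foldr zpush u t) = zpush x (foldr zpush u r)"
      and "zpush x (foldr zpush u t) \<noteq> Zero"
      using Cons.prems(4,5) by simp_all
  qed
  moreover have "foldr zpush u t \<noteq> Zero" using Cons.prems(5) by auto
  ultimately show ?case using Cons.IH u Cons.prems(2,3) by blast
qed simp

lemma zfp_zero_left_cancellative:
  assumes "zero_left_cancellative (UNIV::'a set) (*) (0::'a::{monoid_mult,mult_zero})"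
    and "zero_left_cancellative (UNIV::'b set) (*) (0::'b::{monoid_mult,mult_zero})"
  shows "zero_left_cancellative (zfp_carrier::('a, 'b) zfp set) zfp_mult Zero"
  unfolding zero_left_cancellative_def
proof (intro ballI impI)
  fix s t r :: "('a, 'b) zfp"
  assume s: "s \<in> zfp_carrier" and t: "t \<in> zfp_carrier" and r: "r \<in> zfp_carrier"
    and st: "zfp_mult s t = zfp_mult s r \<and> zfp_mult s t \<noteq> Zero"
  from s obtain u where "s = Word u" "reduced u"
  proof (cases rule: zfp_carrier_cases)
    case 1
    then show ?thesis using st by simp
  qed
  with st show "t = r"
    using foldr_zpush_left_cancel[OF factor_zero_left_cancellative[OF assms] \<open>reduced u\<close> t r]
    by auto
qed

section \<open>Principal right ideals of the 0-free product\<close>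

abbreviation zfp_rideal :: "('a::{monoid_mult,mult_zero}, 'b::{monoid_mult,mult_zero}) zfp \<Rightarrow> ('a, 'b) zfp set" where
  "zfp_rideal s \<equiv> rideal zfp_carrier zfp_mult s"

lemma zfp_rideal_subset_carrier: "s \<in> zfp_carrier \<Longrightarrow> zfp_rideal s \<subseteq> zfp_carrier"
  by (auto simp: rideal_def zfp_mult_in_carrier)

lemma Zero_in_zfp_rideal: "Zero \<in> zfp_rideal s"
  unfolding rideal_def by (cases s) (auto intro!: exI[of _ Zero])

definition zfp_cylinder :: "('a::{monoid_mult,mult_zero} + 'b::{monoid_mult,mult_zero}) list \<Rightarrow> ('a + 'b) set \<Rightarrow> ('a, 'b) zfp set" where
  "zfp_cylinder p C = insert Zero {Word (p @ c # r) | c r. c \<in> C \<and> reduced (p @ c # r)}"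

lemma zfp_cylinder_Int_same: "zfp_cylinder p C \<inter> zfp_cylinder p D = zfp_cylinder p (C \<inter> D)"
  by (auto simp: zfp_cylinder_def)

lemma zfp_cylinder_empty: "zfp_cylinder p {} = {Zero}"
  by (simp add: zfp_cylinder_def)

lemma zfp_cylinder_UN: "C \<noteq> {} \<Longrightarrow> zfp_cylinder p (\<Union>c\<in>C. D c) = (\<Union>c\<in>C. zfp_cylinder p (D c))"
  by (auto simp: zfp_cylinder_def)

lemma zfp_cylinder_non_letters: "(\<And>c. c \<in> C \<Longrightarrow> \<not> letter_ok c) \<Longrightarrow> zfp_cylinder p C = {Zero}"
  by (auto simp: zfp_cylinder_def reduced_append reduced_Cons)

lemma zfp_cylinder_subset: "c \<in> C \<Longrightarrow> zfp_cylinder (p @ c # q) D \<subseteq> zfp_cylinder p C"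
  by (auto simp: zfp_cylinder_def)

lemma zfp_cylinder_Int_disjoint:
  assumes "length p \<le> length q" "p \<noteq> q" "\<And>c q'. q = p @ c # q' \<Longrightarrow> c \<notin> C"
  shows "zfp_cylinder p C \<inter> zfp_cylinder q D = {Zero}"
proof -
  have False if eq: "p @ c # r = q @ d # r'" and c: "c \<in> C" for c r d r'
  proof -
    have "take (length p) q = p"
      using arg_cong[OF eq, of "take (length p)"] assms(1) by simp
    then have q: "q = p @ drop (length p) q" by (metis append_take_drop_id)
    show False
    proof (cases "drop (length p) q")
      case Nil
      then show False using q assms(2) by simp
    next
      case (Cons c' q')
      then have "q = p @ c' # q'" using q by simp
      moreover from this have "c' = c" using eq by simp
      ultimately show False using assms(3) c by blast
    qed
  qed
  then show ?thesis by (auto simp: zfp_cylinder_def)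
qed

lemma zpush_nonunit_cases:
  assumes x: "letter_ok x" "\<not> letter_unit x" and t: "t \<in> zfp_carrier"
  obtains "zpush x t = Zero"
    | c r where "zpush x t = Word (c # r)" "c \<in> letter_rideal x" "reduced (c # r)"
  using t
proof (cases rule: zfp_carrier_cases)
  case (2 w)
  from \<open>reduced w\<close> show ?thesis
  proof (cases rule: zpush_Word_cases[where x = x])
    case (merge y w')
    have "letter_mult x y \<in> letter_rideal x" using merge by (auto simp: letter_rideal_iff)
    moreover have "letter_mult x y \<noteq> factor_one x" using x merge by (auto simp: letter_unit_def)
    ultimately show ?thesis
    proof (cases "letter_mult x y = factor_zero x")
      case False
      then have red: "reduced (letter_mult x y # w')"
        using merge 2 \<open>letter_mult x y \<noteq> factor_one x\<close> by (auto simp: reduced_Cons letter_ok_iff)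
      then show ?thesis
        using that(2)[OF _ \<open>letter_mult x y \<in> letter_rideal x\<close> red] merge 2
        by (simp add: zfp_cons_letter reduced_Cons)
    qed (use that(1) merge 2 in \<open>simp add: zfp_cons_def\<close>)
  next
    case prepend
    have red: "reduced (x # w)" using prepend x 2 by (auto simp: reduced_Cons)
    then show ?thesis
      using that(2)[OF _ self_in_letter_rideal red] prepend x 2 by (simp add: zfp_cons_letter)
  qed
qed simp

lemma zpush_onto_letter_rideal:
  assumes x: "letter_ok x" and c: "c \<in> letter_rideal x" and r: "reduced (c # r)"
  obtains t where "t \<in> zfp_carrier" "zpush x t = Word (c # r)"
proof -
  obtain m where m: "isl m = isl x" "c = letter_mult x m" using c by (auto simp: letter_rideal_iff)
  have c_ok: "letter_ok c" and r_hd: "r = [] \<or> isl (hd r) \<noteq> isl c"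
    using r by (auto simp: reduced_Cons)
  consider "m = factor_one x" | "m = factor_zero x" | "letter_ok m"
    using m factor_zero_cong factor_one_cong by (metis letter_ok_iff)
  then show ?thesis
  proof cases
    case 1
    then have "c = x" using m by simp
    then show ?thesis using that[of "Word r"] r by (simp add: zpush_reduced_Cons reduced_Cons)
  next
    case 2
    then show ?thesis using m c_ok by (simp add: letter_ok_iff)
  next
    case 3
    then have "reduced (m # r)" using r m r_hd by (auto simp: reduced_Cons isl_letter_rideal[OF c])
    then show ?thesis using that[of "Word (m # r)"] m c_ok
      by (simp add: zpush_Word zfp_cons_def letter_ok_iff)
  qed
qed

lemma reduced_append_letter_rideal:
  "reduced (p @ [x]) \<Longrightarrow> c \<in> letter_rideal x \<Longrightarrow> reduced (p @ c # r) \<longleftrightarrow> reduced (c # r)"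
  using isl_letter_rideal[of c x] by (simp add: reduced_append)

lemma zfp_mult_snoc_in_cylinder:
  assumes r: "reduced (p @ [x])" and nu: "\<not> letter_unit x" and t: "t \<in> zfp_carrier"
  shows "zfp_mult (Word (p @ [x])) t \<in> zfp_cylinder p (letter_rideal x)"
proof -
  have x: "letter_ok x" using r by (simp add: reduced_append)
  from x nu t show ?thesis
  proof (cases rule: zpush_nonunit_cases)
    case (2 c r')
    then show ?thesis
      using reduced_append_letter_rideal[OF r] zfp_mult_Word_Word[of p "c # r'"]
      by (auto simp: zfp_cylinder_def)
  qed (simp add: zfp_cylinder_def)
qed

lemma zfp_cylinder_subset_rideal_snoc:
  assumes r: "reduced (p @ [x])"
  shows "zfp_cylinder p (letter_rideal x) \<subseteq> zfp_rideal (Word (p @ [x]))"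
proof
  fix e assume "e \<in> zfp_cylinder p (letter_rideal x)"
  then consider "e = Zero"
    | c r' where "e = Word (p @ c # r')" "c \<in> letter_rideal x" "reduced (c # r')"
    using reduced_append_letter_rideal[OF r] by (auto simp: zfp_cylinder_def)
  then show "e \<in> zfp_rideal (Word (p @ [x]))"
  proof cases
    case 1
    then show ?thesis unfolding rideal_def by (auto intro!: exI[of _ Zero])
  next
    case 2
    have x: "letter_ok x" using r by (simp add: reduced_append)
    obtain t where t: "t \<in> zfp_carrier" "zpush x t = Word (c # r')"
      using zpush_onto_letter_rideal[OF x 2(2,3)] .
    have "e = zfp_mult (Word (p @ [x])) t"
      using 2 t reduced_append_letter_rideal[OF r] zfp_mult_Word_Word[of p "c # r'"] by simp
    then show ?thesis using t(1) unfolding rideal_def by blast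
  qed
qed

lemma zfp_rideal_snoc_nonunit:
  assumes "reduced (p @ [x])" "\<not> letter_unit x"
  shows "zfp_rideal (Word (p @ [x])) = zfp_cylinder p (letter_rideal x)"
  using zfp_mult_snoc_in_cylinder[OF assms] zfp_cylinder_subset_rideal_snoc[OF assms(1)]
  unfolding rideal_def by blast

lemma zfp_rideal_snoc_unit:
  assumes r: "reduced (p @ [x])" and u: "letter_unit x"
  shows "zfp_rideal (Word (p @ [x])) = zfp_rideal (Word p)"
proof
  have x: "letter_ok x" and p: "reduced p" using r by (simp_all add: reduced_append)
  show "zfp_rideal (Word (p @ [x])) \<subseteq> zfp_rideal (Word p)"
    using rideal_mult_subset[OF zfp_monoid0, of "Word p" "Word [x]"] zfp_mult_Word_Word[OF r] p x
    by simp
  obtain y where y: "isl y = isl x" "letter_mult x y = factor_one x" using u by (auto simp: letter_unit_def)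
  have "letter_ok y"
    using x y factor_zero_cong[OF y(1)] factor_one_cong[OF y(1)] factor_one_neq_factor_zero[OF x]
    by (auto simp: letter_ok_iff)
  have "zpush x (Word [y]) = Word []"
    using \<open>letter_ok y\<close> y factor_one_neq_factor_zero[OF x] by (simp add: zpush_Word zfp_cons_def)
  then have "Word p = zfp_mult (Word (p @ [x])) (Word [y])"
    using zfp_mult_Word_Word[of p "[]"] p by simp
  then show "zfp_rideal (Word p) \<subseteq> zfp_rideal (Word (p @ [x]))"
    using rideal_mult_subset[OF zfp_monoid0, of "Word (p @ [x])" "Word [y]"] r \<open>letter_ok y\<close>
    by simp
qed

lemma zfp_rideal_Word_cases:
  assumes "reduced u"
  obtains "zfp_rideal (Word u) = zfp_carrier"
    | p x where "reduced (p @ [x])" "\<not> letter_unit x"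
        "zfp_rideal (Word u) = zfp_cylinder p (letter_rideal x)"
  using assms
proof (induction u arbitrary: thesis rule: rev_induct)
  case Nil
  have "zfp_rideal (Word []) = zfp_carrier"
    using rideal_one[OF zfp_monoid0] unfolding zfp_one_def .
  then show ?case by (rule Nil.prems(1))
next
  case (snoc x p)
  show ?case
  proof (cases "letter_unit x")
    case True
    have eq: "zfp_rideal (Word (p @ [x])) = zfp_rideal (Word p)"
      using snoc.prems(3) True by (rule zfp_rideal_snoc_unit)
    show ?thesis
    proof (rule snoc.IH)
      show "reduced p" using snoc.prems(3) by (simp add: reduced_append)
    next
      assume "zfp_rideal (Word p) = zfp_carrier"
      then show thesis using eq by (intro snoc.prems(1)) simp
    next
      fix q y assume "reduced (q @ [y])" "\<not> letter_unit y"
        "zfp_rideal (Word p) = zfp_cylinder q (letter_rideal y)"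
      then show thesis using eq by (intro snoc.prems(2)[of q y]) simp_all
    qed
  next
    case False
    with snoc.prems(3) show ?thesis
      by (rule snoc.prems(2)[OF _ _ zfp_rideal_snoc_nonunit[OF snoc.prems(3) False]])
  qed
qed

lemma zfp_cylinder_Int_cases_ordered:
  assumes x: "reduced (p @ [x])" "\<not> letter_unit x" and y: "reduced (q @ [y])" "\<not> letter_unit y"
    and pq: "length p \<le> length q"
  obtains (trivial) "zfp_cylinder p (letter_rideal x) \<inter> zfp_cylinder q (letter_rideal y) = {Zero}"
    | (principal) v where "v \<in> zfp_carrier" "v \<noteq> Zero"
        "zfp_cylinder p (letter_rideal x) \<inter> zfp_cylinder q (letter_rideal y) = zfp_rideal v"
    | (letter) "q = p" "isl y = isl x"
        "zfp_cylinder p (letter_rideal x) \<inter> zfp_cylinder q (letter_rideal y) =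
           zfp_cylinder p (letter_rideal x \<inter> letter_rideal y)"
proof (cases "\<exists>c q'. q = p @ c # q' \<and> c \<in> letter_rideal x")
  case True
  then have "zfp_cylinder q (letter_rideal y) \<subseteq> zfp_cylinder p (letter_rideal x)"
    using zfp_cylinder_subset by blast
  then have I: "zfp_cylinder p (letter_rideal x) \<inter> zfp_cylinder q (letter_rideal y) =
      zfp_rideal (Word (q @ [y]))"
    using zfp_rideal_snoc_nonunit[OF y] by blast
  show ?thesis using principal[OF _ _ I] y(1) by simp
next
  case False
  show ?thesis
  proof (cases "q = p")
    case True
    then show ?thesis
      using letter trivial letter_rideal_Int_other_factor zfp_cylinder_Int_same zfp_cylinder_empty
      by metis
  next
    case False
    with \<open>\<not> (\<exists>c q'. _)\<close> show ?thesis
      using trivial zfp_cylinder_Int_disjoint[OF pq] by metis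
  qed
qed

lemma zfp_cylinder_Int_cases:
  assumes x: "reduced (p @ [x])" "\<not> letter_unit x" and y: "reduced (q @ [y])" "\<not> letter_unit y"
  obtains (trivial) "zfp_cylinder p (letter_rideal x) \<inter> zfp_cylinder q (letter_rideal y) = {Zero}"
    | (principal) v where "v \<in> zfp_carrier" "v \<noteq> Zero"
        "zfp_cylinder p (letter_rideal x) \<inter> zfp_cylinder q (letter_rideal y) = zfp_rideal v"
    | (letter) p' x' y' where "reduced (p' @ [x'])" "\<not> letter_unit x'" "isl y' = isl x'"
        "zfp_cylinder p (letter_rideal x) \<inter> zfp_cylinder q (letter_rideal y) =
           zfp_cylinder p' (letter_rideal x' \<inter> letter_rideal y')"
proof (cases "length p \<le> length q")
  case True
  from x y True show ?thesis
    by (cases rule: zfp_cylinder_Int_cases_ordered) (use trivial principal letter[OF x] in auto)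
next
  case False
  from y x show ?thesis
    by (cases rule: zfp_cylinder_Int_cases_ordered)
      (use False trivial principal letter[OF y] in \<open>auto simp: Int_commute\<close>)
qed

lemma zfp_rideal_Int_cases:
  assumes s: "s \<in> zfp_carrier" and t: "t \<in> zfp_carrier"
  obtains (trivial) "zfp_rideal s \<inter> zfp_rideal t = {Zero}"
    | (principal) v where "v \<in> zfp_carrier" "v \<noteq> Zero" "zfp_rideal s \<inter> zfp_rideal t = zfp_rideal v"
    | (letter) p x y where "reduced (p @ [x])" "\<not> letter_unit x" "isl y = isl x"
        "zfp_rideal s \<inter> zfp_rideal t = zfp_cylinder p (letter_rideal x \<inter> letter_rideal y)"
proof (cases "s = Zero \<or> t = Zero")
  case True
  then show ?thesis
    using trivial rideal_zero[OF zfp_monoid0] Zero_in_zfp_rideal by blast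
next
  case False
  then obtain u w where u: "s = Word u" "reduced u" and w: "t = Word w" "reduced w"
    using s t by (metis zfp_carrier_cases)
  from u(2) show ?thesis
  proof (cases rule: zfp_rideal_Word_cases)
    case 1
    then show ?thesis using principal[of t] t w zfp_rideal_subset_carrier[OF t] u by auto
  next
    case sx: (2 p x)
    from w(2) show ?thesis
    proof (cases rule: zfp_rideal_Word_cases)
      case 1
      then show ?thesis using principal[of s] s u zfp_rideal_subset_carrier[OF s] w by auto
    next
      case ty: (2 q y)
      from sx(1,2) ty(1,2) show ?thesis
        by (cases rule: zfp_cylinder_Int_cases) (use trivial principal letter u w sx ty in auto)
    qed
  qed
qed

section \<open>Alignment properties\<close>

definition zfp_snoc :: "('a::{monoid_mult,mult_zero} + 'b::{monoid_mult,mult_zero}) list \<Rightarrow> ('a + 'b) \<Rightarrow> ('a, 'b) zfp" where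
  "zfp_snoc p c = (if c = factor_zero c then Zero else Word (p @ [c]))"

lemma zfp_snoc_rideal:
  assumes x: "reduced (p @ [x])" "\<not> letter_unit x" and c: "c \<in> letter_rideal x"
  shows "zfp_snoc p c \<in> zfp_carrier \<and> zfp_rideal (zfp_snoc p c) = zfp_cylinder p (letter_rideal c)"
proof (cases "c = factor_zero c")
  case True
  then have "letter_rideal c = {c}" using letter_rideal_factor_zero[of c] by simp
  then have "zfp_cylinder p (letter_rideal c) = {Zero}"
    using True by (intro zfp_cylinder_non_letters) (auto simp: letter_ok_iff)
  then show ?thesis using True rideal_zero[OF zfp_monoid0] by (simp add: zfp_snoc_def)
next
  case False
  have "\<not> letter_unit c" using x(2) letter_unit_rideal[OF c] by blast
  then have "c \<noteq> factor_one c"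
    unfolding letter_unit_def by (metis letter_mult_factor_one(2))
  with False x(1) have "reduced (p @ [c])"
    using isl_letter_rideal[OF c] by (auto simp: reduced_append letter_ok_iff)
  then show ?thesis
    using False zfp_rideal_snoc_nonunit \<open>\<not> letter_unit c\<close> by (simp add: zfp_snoc_def)
qed

lemma letter_rideal_Int_eq:
  "isl y = isl x \<Longrightarrow>
     letter_rideal x \<inter> letter_rideal y = rideal (factor x) letter_mult x \<inter> rideal (factor x) letter_mult y"
  by (simp add: letter_rideal_def factor_cong[of y x])

lemma UN_letter_rideal_eq:
  "C \<subseteq> factor x \<Longrightarrow> (\<Union>c\<in>C. rideal (factor x) letter_mult c) = (\<Union>c\<in>C. letter_rideal c)"
  by (intro SUP_cong refl) (simp add: letter_rideal_in_factor[of _ x] subset_iff)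

lemma zfp_cylinder_UN_letter_rideal:
  assumes x: "reduced (p @ [x])" "\<not> letter_unit x" and C: "C \<subseteq> letter_rideal x"
  shows "zfp_snoc p ` C \<subseteq> zfp_carrier"
    and "C \<noteq> {} \<Longrightarrow> zfp_cylinder p (\<Union>c\<in>C. letter_rideal c) = (\<Union>v\<in>zfp_snoc p ` C. zfp_rideal v)"
  using zfp_snoc_rideal[OF x subsetD[OF C]] by (auto simp: zfp_cylinder_UN)

lemma zfp_cylinder_admits_lcm:
  assumes lcm: "admits_lcm (factor x) letter_mult"
    and x: "reduced (p @ [x])" "\<not> letter_unit x" and y: "isl y = isl x"
  obtains v where "v \<in> zfp_carrier" "zfp_cylinder p (letter_rideal x \<inter> letter_rideal y) = zfp_rideal v"
proof -
  have "x \<in> factor x" "y \<in> factor x" using y by (simp_all add: factor_def)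
  then obtain c where "c \<in> factor x"
      "rideal (factor x) letter_mult x \<inter> rideal (factor x) letter_mult y = rideal (factor x) letter_mult c"
    using lcm unfolding admits_lcm_def by meson
  then have I: "letter_rideal x \<inter> letter_rideal y = letter_rideal c"
    using y by (simp add: letter_rideal_Int_eq letter_rideal_in_factor)
  then have "c \<in> letter_rideal x" using self_in_letter_rideal by blast
  with I show ?thesis using that zfp_snoc_rideal[OF x] by metis
qed

lemma zfp_cylinder_finitely_aligned:
  assumes fa: "finitely_aligned (factor x) letter_mult"
    and x: "reduced (p @ [x])" "\<not> letter_unit x" and y: "isl y = isl x"
  obtains R where "R \<subseteq> zfp_carrier" "finite R"
    "zfp_cylinder p (letter_rideal x \<inter> letter_rideal y) = (\<Union>v\<in>R. zfp_rideal v)"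
proof -
  have "x \<in> factor x" "y \<in> factor x" using y by (simp_all add: factor_def)
  then obtain C where C: "C \<subseteq> factor x" "finite C"
      "rideal (factor x) letter_mult x \<inter> rideal (factor x) letter_mult y = (\<Union>c\<in>C. rideal (factor x) letter_mult c)"
    using fa unfolding finitely_aligned_def by meson
  then have I: "letter_rideal x \<inter> letter_rideal y = (\<Union>c\<in>C. letter_rideal c)"
    using UN_letter_rideal_eq[OF C(1)] y by (simp add: letter_rideal_Int_eq)
  then have "C \<subseteq> letter_rideal x" using self_in_letter_rideal by blast
  moreover have "C \<noteq> {}"
    using I factor_zero_in_letter_rideal[of x] factor_zero_in_letter_rideal[of y] factor_zero_cong[OF y]
    by auto
  ultimately show ?thesis
    using that[of "zfp_snoc p ` C"] zfp_cylinder_UN_letter_rideal[OF x] C(2) I by simp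
qed

lemma zfp_snoc_rideal_disjoint:
  assumes x: "reduced (p @ [x])" "\<not> letter_unit x"
    and c: "c \<in> letter_rideal x" "c' \<in> letter_rideal x"
    and disjoint: "rideal (factor x) letter_mult c \<inter> rideal (factor x) letter_mult c' = {factor_zero x}"
  shows "zfp_rideal (zfp_snoc p c) \<inter> zfp_rideal (zfp_snoc p c') = {Zero}"
proof -
  have "c \<in> factor x" "c' \<in> factor x"
    using isl_letter_rideal[OF c(1)] isl_letter_rideal[OF c(2)] by (simp_all add: factor_def)
  then have "letter_rideal c \<inter> letter_rideal c' = {factor_zero x}"
    using disjoint letter_rideal_in_factor[of c x] letter_rideal_in_factor[of c' x] by simp
  then have "zfp_rideal (zfp_snoc p c) \<inter> zfp_rideal (zfp_snoc p c') = zfp_cylinder p {factor_zero x}"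
    using zfp_snoc_rideal[OF x c(1)] zfp_snoc_rideal[OF x c(2)] by (simp add: zfp_cylinder_Int_same)
  also have "\<dots> = {Zero}"
    by (rule zfp_cylinder_non_letters) (simp add: letter_ok_iff)
  finally show ?thesis .
qed

lemma zfp_snoc_image_pairwise_disjoint:
  assumes x: "reduced (p @ [x])" "\<not> letter_unit x" and C: "C \<subseteq> letter_rideal x"
    and disjoint: "\<forall>c\<in>C. \<forall>c'\<in>C. c \<noteq> c' \<longrightarrow>
      rideal (factor x) letter_mult c \<inter> rideal (factor x) letter_mult c' = {factor_zero x}"
  shows "\<forall>v\<in>zfp_snoc p ` C. \<forall>v'\<in>zfp_snoc p ` C. v \<noteq> v' \<longrightarrow> zfp_rideal v \<inter> zfp_rideal v' = {Zero}"
proof (intro ballI impI)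
  fix v v' assume "v \<in> zfp_snoc p ` C" "v' \<in> zfp_snoc p ` C" "v \<noteq> v'"
  then obtain c c' where cc': "c \<in> C" "c' \<in> C" "c \<noteq> c'" "v = zfp_snoc p c" "v' = zfp_snoc p c'"
    by blast
  moreover have "c \<in> letter_rideal x" "c' \<in> letter_rideal x" using C cc' by blast+
  ultimately show "zfp_rideal v \<inter> zfp_rideal v' = {Zero}"
    using disjoint zfp_snoc_rideal_disjoint[OF x] by simp
qed

lemma zfp_cylinder_strongly_finitely_aligned:
  assumes sfa: "strongly_finitely_aligned (factor x) letter_mult (factor_zero x)"
    and x: "reduced (p @ [x])" "\<not> letter_unit x" and y: "isl y = isl x"
  obtains B where "B \<subseteq> zfp_carrier - {Zero}" "finite B"
    "zfp_cylinder p (letter_rideal x \<inter> letter_rideal y) =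
       (if B = {} then {Zero} else (\<Union>v\<in>B. zfp_rideal v))"
    "\<forall>v\<in>B. \<forall>v'\<in>B. v \<noteq> v' \<longrightarrow> zfp_rideal v \<inter> zfp_rideal v' = {Zero}"
proof -
  have "x \<in> factor x" "y \<in> factor x" using y by (simp_all add: factor_def)
  then obtain C where C: "C \<subseteq> factor x - {factor_zero x}" "finite C"
      "rideal (factor x) letter_mult x \<inter> rideal (factor x) letter_mult y =
         (if C = {} then {factor_zero x} else (\<Union>c\<in>C. rideal (factor x) letter_mult c))"
      "\<forall>c\<in>C. \<forall>c'\<in>C. c \<noteq> c' \<longrightarrow> rideal (factor x) letter_mult c \<inter> rideal (factor x) letter_mult c' = {factor_zero x}"
    using sfa unfolding strongly_finitely_aligned_def by meson
  have "C \<subseteq> factor x" using C(1) by blast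
  then have I: "letter_rideal x \<inter> letter_rideal y =
      (if C = {} then {factor_zero x} else (\<Union>c\<in>C. letter_rideal c))"
    using C(3) y by (simp add: letter_rideal_Int_eq UN_letter_rideal_eq)
  show ?thesis
  proof (cases "C = {}")
    case True
    then have "zfp_cylinder p (letter_rideal x \<inter> letter_rideal y) = {Zero}"
      using I by (auto intro!: zfp_cylinder_non_letters simp: letter_ok_iff)
    then show ?thesis using that[of "{}"] by simp
  next
    case False
    then have Cx: "C \<subseteq> letter_rideal x" using I self_in_letter_rideal by auto
    show ?thesis
    proof (rule that[of "zfp_snoc p ` C"])
      have "zfp_snoc p c \<noteq> Zero" if "c \<in> C" for c
        using that C(1) factor_zero_cong[of c x] by (auto simp: zfp_snoc_def factor_def)
      then show "zfp_snoc p ` C \<subseteq> zfp_carrier - {Zero}"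
        using zfp_cylinder_UN_letter_rideal(1)[OF x Cx] by auto
      show "finite (zfp_snoc p ` C)" using C(2) by simp
      show "zfp_cylinder p (letter_rideal x \<inter> letter_rideal y) =
          (if zfp_snoc p ` C = {} then {Zero} else (\<Union>v\<in>zfp_snoc p ` C. zfp_rideal v))"
        using I False zfp_cylinder_UN_letter_rideal(2)[OF x Cx False] by simp
      show "\<forall>v\<in>zfp_snoc p ` C. \<forall>v'\<in>zfp_snoc p ` C. v \<noteq> v' \<longrightarrow> zfp_rideal v \<inter> zfp_rideal v' = {Zero}"
        using zfp_snoc_image_pairwise_disjoint[OF x Cx C(4)] .
    qed
  qed
qed

lemma zfp_admits_lcm:
  assumes "admits_lcm (UNIV::'a::{monoid_mult,mult_zero} set) (*)"
    and "admits_lcm (UNIV::'b::{monoid_mult,mult_zero} set) (*)"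
  shows "admits_lcm (zfp_carrier::('a, 'b) zfp set) zfp_mult"
  unfolding admits_lcm_def
proof (intro ballI)
  fix s t :: "('a, 'b) zfp" assume "s \<in> zfp_carrier" "t \<in> zfp_carrier"
  then show "\<exists>r\<in>zfp_carrier. zfp_rideal s \<inter> zfp_rideal t = zfp_rideal r"
  proof (cases rule: zfp_rideal_Int_cases)
    case trivial
    then show ?thesis using rideal_zero[OF zfp_monoid0] by force
  next
    case (letter p x y)
    obtain v where "v \<in> zfp_carrier" "zfp_cylinder p (letter_rideal x \<inter> letter_rideal y) = zfp_rideal v"
      using zfp_cylinder_admits_lcm[OF factor_admits_lcm[OF assms] letter(1-3)] .
    then show ?thesis using letter(4) by auto
  qed blast
qed

lemma zfp_finitely_aligned:
  assumes "finitely_aligned (UNIV::'a::{monoid_mult,mult_zero} set) (*)"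
    and "finitely_aligned (UNIV::'b::{monoid_mult,mult_zero} set) (*)"
  shows "finitely_aligned (zfp_carrier::('a, 'b) zfp set) zfp_mult"
  unfolding finitely_aligned_def
proof (intro ballI)
  fix s t :: "('a, 'b) zfp" assume "s \<in> zfp_carrier" "t \<in> zfp_carrier"
  then show "\<exists>R. R \<subseteq> zfp_carrier \<and> finite R \<and> zfp_rideal s \<inter> zfp_rideal t = (\<Union>r\<in>R. zfp_rideal r)"
  proof (cases rule: zfp_rideal_Int_cases)
    case trivial
    then show ?thesis using rideal_zero[OF zfp_monoid0] by (intro exI[of _ "{Zero}"]) auto
  next
    case (principal v)
    then show ?thesis by (intro exI[of _ "{v}"]) auto
  next
    case (letter p x y)
    from zfp_cylinder_finitely_aligned[OF factor_finitely_aligned[OF assms] letter(1-3)]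
    show ?thesis using letter(4) by metis
  qed
qed

lemma zfp_strongly_finitely_aligned:
  assumes "strongly_finitely_aligned (UNIV::'a::{monoid_mult,mult_zero} set) (*) 0"
    and "strongly_finitely_aligned (UNIV::'b::{monoid_mult,mult_zero} set) (*) 0"
  shows "strongly_finitely_aligned (zfp_carrier::('a, 'b) zfp set) zfp_mult Zero"
  unfolding strongly_finitely_aligned_def
proof (intro ballI)
  fix s t :: "('a, 'b) zfp" assume "s \<in> zfp_carrier" "t \<in> zfp_carrier"
  then show "\<exists>B. B \<subseteq> zfp_carrier - {Zero} \<and> finite B \<and>
      zfp_rideal s \<inter> zfp_rideal t = (if B = {} then {Zero} else (\<Union>b\<in>B. zfp_rideal b)) \<and>
      (\<forall>b\<in>B. \<forall>b'\<in>B. b \<noteq> b' \<longrightarrow> zfp_rideal b \<inter> zfp_rideal b' = {Zero})"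
  proof (cases rule: zfp_rideal_Int_cases)
    case trivial
    then show ?thesis by (intro exI[of _ "{}"]) auto
  next
    case (principal v)
    then show ?thesis by (intro exI[of _ "{v}"]) auto
  next
    case (letter p x y)
    from zfp_cylinder_strongly_finitely_aligned[OF factor_strongly_finitely_aligned[OF assms] letter(1-3)]
    show ?thesis using letter(4) by metis
  qed
qed

theorem theorem9p5:
  assumes M_nontriv: "(0::'a::{monoid_mult,mult_zero}) \<noteq> 1"
      and N_nontriv: "(0::'b::{monoid_mult,mult_zero}) \<noteq> 1"
      and M_zlc: "zero_left_cancellative (UNIV::'a set) (*) 0"
      and N_zlc: "zero_left_cancellative (UNIV::'b set) (*) 0"
  shows
   "(admits_lcm (UNIV::'a set) (*) \<and> admits_lcm (UNIV::'b set) (*) \<longrightarrow>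
       monoid0 (zfp_carrier::('a,'b) zfp set) zfp_mult zfp_one Zero \<and>
       zero_left_cancellative (zfp_carrier::('a,'b) zfp set) zfp_mult Zero \<and>
       admits_lcm (zfp_carrier::('a,'b) zfp set) zfp_mult) \<and>
    (finitely_aligned (UNIV::'a set) (*) \<and> finitely_aligned (UNIV::'b set) (*) \<longrightarrow>
       monoid0 (zfp_carrier::('a,'b) zfp set) zfp_mult zfp_one Zero \<and>
       zero_left_cancellative (zfp_carrier::('a,'b) zfp set) zfp_mult Zero \<and>
       finitely_aligned (zfp_carrier::('a,'b) zfp set) zfp_mult) \<and>
    (strongly_finitely_aligned (UNIV::'a set) (*) 0 \<and> strongly_finitely_aligned (UNIV::'b set) (*) 0 \<longrightarrow>
       monoid0 (zfp_carrier::('a,'b) zfp set) zfp_mult zfp_one Zero \<and>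
       zero_left_cancellative (zfp_carrier::('a,'b) zfp set) zfp_mult Zero \<and>
       strongly_finitely_aligned (zfp_carrier::('a,'b) zfp set) zfp_mult Zero)"
  using zfp_monoid0 zfp_zero_left_cancellative[OF M_zlc N_zlc]
    zfp_admits_lcm zfp_finitely_aligned zfp_strongly_finitely_aligned
  by blast

end
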